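(* For every integer $m\ge2$ and every $a\ge0$, all leading principal minors $R_l=\det\big((R_{ij})_{1\le i,j\le l}\big)$, $l=1,\dots,m$, are positive; hence $R$ is positive definite. Moreover every entry of $R^{-1}$ is strictly positive: $(R^{-1})_{ij}>0$ for all $i,j=1,\dots,m$. In particular $r_i=\sum_{j=1}^m(R^{-1})_{ij}>0$ for each $i$.
   Context: $R$ is the symmetric tridiagonal $m\times m$ matrix with $R_{ii}=2a^2+2i-1$ ($1\le i\le m$), $R_{i,i+1}=R_{i+1,i}=-(a^2+i)$ ($1\le i\le m-1$), and all other entries zero. *)

theory Defs
  imports "Jordan_Normal_Form.Matrix" "Jordan_Normal_Form.Determinant"
begin

text \<open>The m x m symmetric tridiagonal matrix R (paper indices 1..m are shifted
  to 0-based indices 0..m-1: entry (i,j) here is the paper's entry (i+1,j+1)).\<close>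
definition Rmat :: "nat \<Rightarrow> real \<Rightarrow> real mat" where
  "Rmat m a = mat m m (\<lambda>(i,j).
     if i = j then 2 * a^2 + 2 * real (i+1) - 1
     else if j = i + 1 then - (a^2 + real (i+1))
     else if i = j + 1 then - (a^2 + real (j+1))
     else 0)"

definition leading_submat :: "'a mat \<Rightarrow> nat \<Rightarrow> 'a mat" where
  "leading_submat A l = mat l l (\<lambda>(i,j). A $$ (i,j))"

definition pos_def_mat :: "real mat \<Rightarrow> bool" where
  "pos_def_mat A \<longleftrightarrow> A \<in> carrier_mat (dim_row A) (dim_row A) \<and> A = transpose_mat A \<and>
     (\<forall>v \<in> carrier_vec (dim_row A). v \<noteq> 0\<^sub>v (dim_row A) \<longrightarrow> v \<bullet> (A *\<^sub>v v) > 0)"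

end

theory Submission
  imports Defs
begin

text \<open>
  With \<open>c p = a\<^sup>2 + p\<close> the matrix \<open>R\<close> is the Dirichlet Laplacian of a path
  \<open>0 - 1 - \<dots> - m - m+1\<close> whose edge \<open>(p, p+1)\<close> carries the conductance \<open>c p\<close>: padding a vector
  \<open>x\<close> with \<open>y 0 = y (m+1) = 0\<close>, one has
  \<open>(R x)\<^sub>p = c (p-1) (y p - y (p-1)) + c p (y p - y (p+1))\<close>.
  Everything is proved for an arbitrary conductance with \<open>c 0 \<ge> 0\<close> and \<open>c p > 0\<close> for \<open>p > 0\<close>:
  \<^item> determinants of symmetric tridiagonal matrices obey the continuant recurrence, from which
    the leading minors \<open>D\<^sub>l\<close> satisfy \<open>D\<^sub>l\<^sub>+\<^sub>1 \<ge> c (l+1) D\<^sub>l > 0\<close> by induction;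
  \<^item> summation by parts turns \<open>x \<bullet> R x\<close> into the energy \<open>\<Sum> c p (y p - y (p+1))\<^sup>2\<close>,
    which is positive unless \<open>x = 0\<close> (positive definiteness);
  \<^item> a column of \<open>R\<^sup>-\<^sup>1\<close> solves the Dirichlet problem with a unit source at one node; solving it
    explicitly through the flux \<open>c p (y p - y (p+1))\<close>, which jumps by one at the source, shows
    that this Green function is strictly positive.
  The theorem is then the instance \<open>c p = a\<^sup>2 + p\<close>.
\<close>

section \<open>Symmetric tridiagonal matrices\<close>

definition tridiag :: "nat \<Rightarrow> (nat \<Rightarrow> 'a) \<Rightarrow> (nat \<Rightarrow> 'a) \<Rightarrow> 'a :: zero mat" where
  "tridiag n d e = mat n n (\<lambda>(i,j).
     if i = j then d i else if j = Suc i then e i else if i = Suc j then e j else 0)"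

lemma tridiag_carrier [simp]:
  "tridiag n d e \<in> carrier_mat n n" "dim_row (tridiag n d e) = n" "dim_col (tridiag n d e) = n"
  unfolding tridiag_def by auto

lemma tridiag_index [simp]:
  "i < n \<Longrightarrow> j < n \<Longrightarrow> tridiag n d e $$ (i,j) =
     (if i = j then d i else if j = Suc i then e i else if i = Suc j then e j else 0)"
  unfolding tridiag_def by simp

lemma tridiag_transpose: "transpose_mat (tridiag n d e) = tridiag n d e"
  by (rule eq_matI) auto

lemma leading_submat_tridiag: "l \<le> n \<Longrightarrow> leading_submat (tridiag n d e) l = tridiag l d e"
  unfolding leading_submat_def by (rule eq_matI) auto

lemma det_tridiag_0: "det (tridiag 0 d e) = 1"
  unfolding det_def tridiag_def by simp

lemma det_tridiag_1: "det (tridiag (Suc 0) d e) = d 0"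
proof -
  have "det (tridiag 1 d e) = (\<Sum>j<1. tridiag 1 d e $$ (0,j) * cofactor (tridiag 1 d e) 0 j)"
    by (rule laplace_expansion_row) auto
  moreover have "mat_delete (tridiag 1 d e) 0 0 = tridiag 0 d e"
    by (rule eq_matI) (auto simp: mat_delete_def)
  ultimately show ?thesis by (simp add: cofactor_def det_tridiag_0)
qed

text \<open>The continuant recurrence, obtained by expanding along the last row and then, in the
  minor belonging to the subdiagonal entry, along the last column.\<close>
lemma det_tridiag_Suc_Suc:
  fixes d e :: "nat \<Rightarrow> 'a :: comm_ring_1"
  shows "det (tridiag (Suc (Suc n)) d e)
    = d (Suc n) * det (tridiag (Suc n) d e) - (e n)^2 * det (tridiag n d e)"
proof -
  let ?A = "tridiag (Suc (Suc n)) d e"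
  let ?M = "mat_delete ?A (Suc n) n"
  have "det ?A = (\<Sum>j<Suc (Suc n). ?A $$ (Suc n,j) * cofactor ?A (Suc n) j)"
    by (rule laplace_expansion_row) auto
  also have "\<dots> = e n * cofactor ?A (Suc n) n + d (Suc n) * cofactor ?A (Suc n) (Suc n)"
  proof -
    have "(\<Sum>j<n. ?A $$ (Suc n,j) * cofactor ?A (Suc n) j) = 0"
      by (rule sum.neutral) auto
    then show ?thesis by (simp add: lessThan_Suc)
  qed
  moreover have "mat_delete ?A (Suc n) (Suc n) = tridiag (Suc n) d e"
    by (rule eq_matI) (auto simp: mat_delete_def)
  moreover have "det ?M = e n * det (tridiag n d e)"
  proof -
    have M: "?M \<in> carrier_mat (Suc n) (Suc n)" by (auto simp: mat_delete_def)
    have "det ?M = (\<Sum>i<Suc n. ?M $$ (i,n) * cofactor ?M i n)"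
      by (rule laplace_expansion_column[OF M]) auto
    also have "\<dots> = ?M $$ (n,n) * cofactor ?M n n"
    proof -
      have "(\<Sum>i<n. ?M $$ (i,n) * cofactor ?M i n) = 0"
        by (rule sum.neutral) (auto simp: mat_delete_def)
      then show ?thesis by (simp add: lessThan_Suc)
    qed
    moreover have "mat_delete ?M n n = tridiag n d e"
      by (rule eq_matI) (auto simp: mat_delete_def)
    ultimately show ?thesis by (simp add: cofactor_def mat_delete_def)
  qed
  ultimately show ?thesis
    by (simp add: cofactor_def power2_eq_square algebra_simps)
qed

section \<open>The Dirichlet Laplacian of a weighted path\<close>

text \<open>Nodes \<open>0, \<dots>, n+1\<close>, edge \<open>(p, p+1)\<close> with conductance \<open>c p\<close>, boundary nodes \<open>0\<close> and
  \<open>n+1\<close> grounded; row/column \<open>i\<close> of the matrix belongs to the interior node \<open>i+1\<close>.\<close>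
definition dirichlet_laplacian :: "nat \<Rightarrow> (nat \<Rightarrow> 'a) \<Rightarrow> 'a :: ab_group_add mat" where
  "dirichlet_laplacian n c = tridiag n (\<lambda>i. c i + c (Suc i)) (\<lambda>i. - c (Suc i))"

lemma dirichlet_laplacian_carrier [simp]:
  "dirichlet_laplacian n c \<in> carrier_mat n n"
  "dim_row (dirichlet_laplacian n c) = n" "dim_col (dirichlet_laplacian n c) = n"
  by (simp_all add: dirichlet_laplacian_def)

lemma Rmat_dirichlet_laplacian: "Rmat m a = dirichlet_laplacian m (\<lambda>p. a^2 + real p)"
  unfolding Rmat_def dirichlet_laplacian_def tridiag_def
  by (rule eq_matI) auto

text \<open>The Sturm-Liouville difference operator: the net current leaving node \<open>p\<close> under the
  potential \<open>y\<close>.\<close>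
definition sl_op :: "(nat \<Rightarrow> 'a) \<Rightarrow> (nat \<Rightarrow> 'a) \<Rightarrow> nat \<Rightarrow> 'a :: ring" where
  "sl_op c y p = c (p - 1) * (y p - y (p - 1)) + c p * (y p - y (Suc p))"

definition pad :: "nat \<Rightarrow> 'a vec \<Rightarrow> nat \<Rightarrow> 'a :: zero" where
  "pad n x p = (if 1 \<le> p \<and> p \<le> n then x $ (p - 1) else 0)"

lemma pad_simps [simp]:
  "pad n x 0 = 0" "pad n x (Suc n) = 0" "i < n \<Longrightarrow> pad n x (Suc i) = x $ i"
  by (auto simp: pad_def)

lemma dirichlet_laplacian_mult_vec:
  fixes c :: "nat \<Rightarrow> 'a :: comm_ring"
  assumes x: "x \<in> carrier_vec n" and i: "i < n"
  shows "(dirichlet_laplacian n c *\<^sub>v x) $ i = sl_op c (pad n x) (Suc i)"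
proof -
  have "(dirichlet_laplacian n c *\<^sub>v x) $ i = (\<Sum>k<n. dirichlet_laplacian n c $$ (i,k) * x $ k)"
    using x i by (simp add: mult_mat_vec_def scalar_prod_def atLeast0LessThan)
  also have "\<dots> = (\<Sum>k<n. (if k = i then (c i + c (Suc i)) * x $ i else 0)
     + (if k = Suc i then - c (Suc i) * x $ Suc i else 0)
     + (if Suc k = i then - c i * x $ k else 0))"
    using i by (intro sum.cong) (auto simp: dirichlet_laplacian_def)
  also have "\<dots> = sl_op c (pad n x) (Suc i)"
    using i by (cases i) (auto simp: sum.distrib sum.delta sl_op_def pad_def algebra_simps)
  finally show ?thesis .
qed

text \<open>Inductive invariant \<open>D\<^sub>l\<^sub>+\<^sub>1 \<ge> c (l+1) D\<^sub>l > 0\<close>: by the continuant recurrence,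
  \<open>D\<^sub>l\<^sub>+\<^sub>2 = (c (l+1) + c (l+2)) D\<^sub>l\<^sub>+\<^sub>1 - c (l+1)\<^sup>2 D\<^sub>l \<ge> c (l+2) D\<^sub>l\<^sub>+\<^sub>1\<close>.\<close>
lemma det_dirichlet_laplacian_pos:
  fixes c :: "nat \<Rightarrow> real"
  assumes c0: "0 \<le> c 0" and cpos: "\<And>p. 0 < p \<Longrightarrow> 0 < c p"
  shows "0 < det (dirichlet_laplacian n c)"
proof -
  let ?D = "\<lambda>l. det (dirichlet_laplacian l c)"
  have "c (Suc l) * ?D l \<le> ?D (Suc l) \<and> 0 < ?D l" for l
  proof (induction l)
    case 0
    then show ?case using c0 by (simp add: dirichlet_laplacian_def det_tridiag_0 det_tridiag_1)
  next
    case (Suc l)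
    then have IH: "c (Suc l) * ?D l \<le> ?D (Suc l)" "0 < ?D l" by auto
    have c: "0 < c (Suc l)" "0 < c (Suc (Suc l))" using cpos by auto
    have rec: "?D (Suc (Suc l)) = (c (Suc l) + c (Suc (Suc l))) * ?D (Suc l) - c (Suc l)^2 * ?D l"
      unfolding dirichlet_laplacian_def det_tridiag_Suc_Suc by simp
    have "c (Suc l)^2 * ?D l \<le> c (Suc l) * ?D (Suc l)"
      using mult_left_mono[OF IH(1), of "c (Suc l)"] c by (simp add: power2_eq_square mult.assoc)
    moreover have "0 < ?D (Suc l)"
      using IH mult_pos_pos[OF c(1) IH(2)] by linarith
    ultimately show ?case using rec c by (simp add: algebra_simps)
  qed
  then show ?thesis by blast
qed

lemma summation_by_parts:
  fixes y c :: "nat \<Rightarrow> 'a :: comm_ring_1"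
  assumes "y 0 = 0"
  shows "(\<Sum>i<n. y (Suc i) * sl_op c y (Suc i))
    = (\<Sum>i<n. c i * (y i - y (Suc i))^2) + c n * y n * (y n - y (Suc n))"
proof (induction n)
  case 0
  show ?case using assms by simp
next
  case (Suc n)
  then show ?case by (simp add: sl_op_def algebra_simps power2_eq_square)
qed

lemma dirichlet_energy:
  fixes y c :: "nat \<Rightarrow> 'a :: comm_ring_1"
  assumes "y 0 = 0" and "y (Suc n) = 0"
  shows "(\<Sum>i<n. y (Suc i) * sl_op c y (Suc i)) = (\<Sum>i\<le>n. c i * (y i - y (Suc i))^2)"
  using assms by (simp add: summation_by_parts lessThan_Suc_atMost[symmetric] power2_eq_square)

lemma exists_jump:
  fixes y :: "nat \<Rightarrow> 'a"
  assumes "p \<le> q" and "y p \<noteq> y q"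
  shows "\<exists>i\<in>{p..<q}. y i \<noteq> y (Suc i)"
  using assms
proof (induction q rule: dec_induct)
  case base
  then show ?case by simp
next
  case (step q)
  then show ?case by (cases "y q = y (Suc q)") auto
qed

text \<open>A nonzero interior potential \<open>y p\<close> forces a jump between \<open>p\<close> and the grounded node
  \<open>n+1\<close>, and that edge dissipates positive energy.\<close>
lemma dirichlet_energy_pos:
  fixes y c :: "nat \<Rightarrow> real"
  assumes c0: "0 \<le> c 0" and cpos: "\<And>p. 0 < p \<Longrightarrow> 0 < c p"
    and y0: "y 0 = 0" and yn: "y (Suc n) = 0"
    and p: "1 \<le> p" "p \<le> n" "y p \<noteq> 0"
  shows "0 < (\<Sum>i<n. y (Suc i) * sl_op c y (Suc i))"
proof -
  obtain i where i: "p \<le> i" "i \<le> n" "y i \<noteq> y (Suc i)"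
    using exists_jump[of p "Suc n" y] p yn by auto
  have nonneg: "0 \<le> c k * (y k - y (Suc k))^2" for k
    using c0 cpos[of k] by (cases k) auto
  have "0 < c i * (y i - y (Suc i))^2"
    using i p cpos[of i] by simp
  also have "\<dots> \<le> (\<Sum>k\<le>n. c k * (y k - y (Suc k))^2)"
    using i nonneg by (intro member_le_sum) auto
  finally show ?thesis by (simp add: dirichlet_energy[OF y0 yn])
qed

lemma dirichlet_laplacian_pos_def:
  fixes c :: "nat \<Rightarrow> real"
  assumes c0: "0 \<le> c 0" and cpos: "\<And>p. 0 < p \<Longrightarrow> 0 < c p"
  shows "pos_def_mat (dirichlet_laplacian n c)"
  unfolding pos_def_mat_def
proof (intro conjI ballI impI)
  show "dirichlet_laplacian n c = transpose_mat (dirichlet_laplacian n c)"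
    by (simp add: dirichlet_laplacian_def tridiag_transpose)
next
  fix v :: "real vec"
  assume "v \<in> carrier_vec (dim_row (dirichlet_laplacian n c))"
    and "v \<noteq> 0\<^sub>v (dim_row (dirichlet_laplacian n c))"
  then have v: "v \<in> carrier_vec n" and nz: "v \<noteq> 0\<^sub>v n" by auto
  obtain k where k: "k < n" "v $ k \<noteq> 0"
    using v nz by (metis carrier_vecD eq_vecI index_zero_vec(1,2))
  have "v \<bullet> (dirichlet_laplacian n c *\<^sub>v v) = (\<Sum>i<n. pad n v (Suc i) * sl_op c (pad n v) (Suc i))"
    using v dirichlet_laplacian_mult_vec[OF v] unfolding scalar_prod_def
    by (auto simp: atLeast0LessThan simp del: index_mult_mat_vec intro!: sum.cong)
  also have "\<dots> > 0"
    by (rule dirichlet_energy_pos[where p = "Suc k"]) (use c0 cpos k in auto)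
  finally show "v \<bullet> (dirichlet_laplacian n c *\<^sub>v v) > 0" .
qed simp

section \<open>Positivity of the Green function\<close>

text \<open>Conservation of current: for a unit source at node \<open>j\<close>, the current
  \<open>c p (y p - y (p+1))\<close> through edge \<open>(p, p+1)\<close> equals the current through edge \<open>(0,1)\<close>,
  plus one once the source has been passed.\<close>
lemma green_flux:
  fixes c y :: "nat \<Rightarrow> 'a :: comm_ring_1"
  assumes eq: "\<And>p. 1 \<le> p \<Longrightarrow> p \<le> m \<Longrightarrow> sl_op c y p = (if p = j then 1 else 0)"
    and j: "1 \<le> j" and p: "p \<le> m"
  shows "c p * (y p - y (Suc p)) = c 0 * (y 0 - y 1) + (if j \<le> p then 1 else 0)"
  using p
proof (induction p)
  case 0
  then show ?case using j by simp
next
  case (Suc p)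
  have "c (Suc p) * (y (Suc p) - y (Suc (Suc p))) = sl_op c y (Suc p) + c p * (y p - y (Suc p))"
    by (simp add: sl_op_def algebra_simps)
  also have "sl_op c y (Suc p) = (if Suc p = j then 1 else 0)"
    using eq Suc.prems by simp
  also have "c p * (y p - y (Suc p)) = c 0 * (y 0 - y 1) + (if j \<le> p then 1 else 0)"
    using Suc by simp
  finally show ?case by (auto simp: le_Suc_eq)
qed

text \<open>Summing the voltage drops \<open>current / conductance\<close> from node \<open>k\<close> to the grounded
  node \<open>m+1\<close> gives the potential explicitly in terms of series resistances.\<close>
lemma green_representation:
  fixes c y :: "nat \<Rightarrow> real"
  assumes cpos: "\<And>p. 0 < p \<Longrightarrow> 0 < c p"
    and eq: "\<And>p. 1 \<le> p \<Longrightarrow> p \<le> m \<Longrightarrow> sl_op c y p = (if p = j then 1 else 0)"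
    and j: "1 \<le> j" and ym: "y (Suc m) = 0" and k: "1 \<le> k" "k \<le> m"
  shows "y k = c 0 * (y 0 - y 1) * (\<Sum>i=k..m. 1 / c i) + (\<Sum>i=max k j..m. 1 / c i)"
proof -
  have "y k = (\<Sum>i=k..m. y i - y (Suc i))"
    using sum_Suc_diff[of k m "\<lambda>i. - y i"] k ym by simp
  also have "\<dots> = (\<Sum>i=k..m. c 0 * (y 0 - y 1) * (1 / c i) + (if j \<le> i then 1 / c i else 0))"
  proof (intro sum.cong refl)
    fix i assume i: "i \<in> {k..m}"
    then have "c i > 0" using k cpos by simp
    then show "y i - y (Suc i) = c 0 * (y 0 - y 1) * (1 / c i) + (if j \<le> i then 1 / c i else 0)"
      using green_flux[OF eq j, of i] i by (auto simp: field_simps)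
  qed
  also have "\<dots> = c 0 * (y 0 - y 1) * (\<Sum>i=k..m. 1 / c i)
      + (\<Sum>i=k..m. if j \<le> i then 1 / c i else 0)"
    by (simp add: sum.distrib sum_distrib_left)
  also have "(\<Sum>i=k..m. if j \<le> i then 1 / c i else 0) = (\<Sum>i\<in>{i\<in>{k..m}. j \<le> i}. 1 / c i)"
    by (rule sum.inter_filter[symmetric]) simp
  also have "{i\<in>{k..m}. j \<le> i} = {max k j..m}" by auto
  finally show ?thesis .
qed

text \<open>With \<open>S k = \<Sum>\<^sub>i\<^sub>=\<^sub>k\<^sup>m 1 / c i\<close>, \<open>M = max k j\<close> and
  \<open>N = min k j\<close>, the representation formula gives
  \<open>(1 + c 0 S 1) y k = S M (1 + c 0 (S 1 - S N))\<close>.\<close>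
lemma green_pos:
  fixes c y :: "nat \<Rightarrow> real"
  assumes c0: "0 \<le> c 0" and cpos: "\<And>p. 0 < p \<Longrightarrow> 0 < c p"
    and eq: "\<And>p. 1 \<le> p \<Longrightarrow> p \<le> m \<Longrightarrow> sl_op c y p = (if p = j then 1 else 0)"
    and y0: "y 0 = 0" and ym: "y (Suc m) = 0"
    and j: "1 \<le> j" "j \<le> m" and k: "1 \<le> k" "k \<le> m"
  shows "0 < y k"
proof -
  define S where "S k = (\<Sum>i=k..m. 1 / c i)" for k
  define M N where "M = max k j" and "N = min k j"
  have rep: "y q = - c 0 * y 1 * S q + S (max q j)" if "1 \<le> q" "q \<le> m" for q
    using green_representation[OF cpos eq j(1) ym that] y0 unfolding S_def by simp
  have S_pos: "0 < S q" if "1 \<le> q" "q \<le> m" for q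
    unfolding S_def using that cpos by (intro sum_pos) auto
  have S_le: "S q \<le> S 1" if "1 \<le> q" for q
    unfolding S_def using that cpos by (intro sum_mono2) (auto intro: less_imp_le)
  have y1: "(1 + c 0 * S 1) * y 1 = S j"
    using rep[of 1] j by (simp add: algebra_simps)
  have "(1 + c 0 * S 1) * y k = - c 0 * S k * ((1 + c 0 * S 1) * y 1) + (1 + c 0 * S 1) * S M"
    by (subst rep[OF k]) (simp add: M_def algebra_simps)
  also have "\<dots> = - c 0 * (S k * S j) + (1 + c 0 * S 1) * S M"
    unfolding y1 by simp
  also have "S k * S j = S M * S N"
    unfolding M_def N_def by (cases "k \<le> j") (auto simp: max_def min_def)
  finally have "(1 + c 0 * S 1) * y k = S M * (1 + c 0 * (S 1 - S N))"
    by (simp add: algebra_simps)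
  moreover have "0 < S M * (1 + c 0 * (S 1 - S N))"
    using S_pos[of M] S_le[of N] j k c0 unfolding M_def N_def
    by (intro mult_pos_pos) (auto intro: add_pos_nonneg)
  moreover have "0 < 1 + c 0 * S 1"
    using S_pos[of 1] j c0 by (simp add: add_pos_nonneg)
  ultimately show ?thesis by (metis zero_less_mult_pos)
qed

lemma invertible_mat_if_det_nonzero:
  fixes A :: "'a :: field mat"
  assumes A: "A \<in> carrier_mat n n" and dA: "det A \<noteq> 0"
  shows "invertible_mat A"
proof -
  have "A \<in> Units (ring_mat TYPE('a) n n)"
    by (rule det_non_zero_imp_unit[OF A dA])
  then obtain B where "B \<in> carrier_mat n n" "B * A = 1\<^sub>m n" "A * B = 1\<^sub>m n"
    unfolding Units_def ring_mat_def by auto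
  then show ?thesis
    using A unfolding invertible_mat_def inverts_mat_def by auto
qed

text \<open>Column \<open>j\<close> of a right inverse is the Green function with source at node \<open>j+1\<close>,
  hence all entries of the inverse are positive.\<close>
lemma dirichlet_laplacian_inverse_pos:
  fixes c :: "nat \<Rightarrow> real"
  assumes c0: "0 \<le> c 0" and cpos: "\<And>p. 0 < p \<Longrightarrow> 0 < c p"
    and B: "B \<in> carrier_mat n n" and inv: "dirichlet_laplacian n c * B = 1\<^sub>m n"
    and i: "i < n" and j: "j < n"
  shows "0 < B $$ (i,j)"
proof -
  let ?y = "pad n (col B j)"
  have col: "col B j \<in> carrier_vec n" using B by (simp add: carrier_vecI)
  have src: "sl_op c ?y p = (if p = Suc j then 1 else 0)" if p: "1 \<le> p" "p \<le> n" for p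
  proof -
    obtain q where q: "p = Suc q" "q < n" using p by (cases p) auto
    have "sl_op c ?y (Suc q) = (dirichlet_laplacian n c *\<^sub>v col B j) $ q"
      using dirichlet_laplacian_mult_vec[OF col q(2)] by simp
    also have "\<dots> = (dirichlet_laplacian n c * B) $$ (q,j)"
      using B q j by simp
    finally show ?thesis using inv q j by simp
  qed
  have "0 < ?y (Suc i)"
    by (rule green_pos[where c = c, OF c0 cpos src]) (use i j in auto)
  then show ?thesis using B i j by simp
qed

theorem mainTheorem7:
  fixes m :: nat and a :: real
  assumes "m \<ge> 2" and "a \<ge> 0"
  shows "(\<forall>l \<in> {1..m}. det (leading_submat (Rmat m a) l) > 0)
    \<and> pos_def_mat (Rmat m a)
    \<and> invertible_mat (Rmat m a)
    \<and> (\<forall>Rinv \<in> carrier_mat m m. Rmat m a * Rinv = 1\<^sub>m m \<and> Rinv * Rmat m a = 1\<^sub>m m \<longrightarrow>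
         (\<forall>i < m. \<forall>j < m. Rinv $$ (i,j) > 0)
       \<and> (\<forall>i < m. (\<Sum>j < m. Rinv $$ (i,j)) > 0))"
proof -
  define c where "c p = a^2 + real p" for p
  have c0: "0 \<le> c 0" and cpos: "\<And>p. 0 < p \<Longrightarrow> 0 < c p"
    by (auto simp: c_def add_nonneg_pos)
  have R: "Rmat m a = dirichlet_laplacian m c"
    unfolding c_def by (rule Rmat_dirichlet_laplacian)
  have det_pos: "0 < det (dirichlet_laplacian l c)" for l
    by (rule det_dirichlet_laplacian_pos[where c = c, OF c0 cpos])
  have minors: "\<forall>l \<in> {1..m}. det (leading_submat (Rmat m a) l) > 0"
    using det_pos by (simp add: R dirichlet_laplacian_def leading_submat_tridiag)
  have invertible: "invertible_mat (Rmat m a)"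
    using det_pos[of m] by (intro invertible_mat_if_det_nonzero[of _ m]) (simp_all add: R)
  have entries: "Rinv $$ (i,j) > 0"
    if "Rinv \<in> carrier_mat m m" "Rmat m a * Rinv = 1\<^sub>m m" "i < m" "j < m" for Rinv i j
    using dirichlet_laplacian_inverse_pos[where c = c, OF c0 cpos] that by (simp add: R)
  have row_sums: "(\<Sum>j < m. Rinv $$ (i,j)) > 0"
    if "Rinv \<in> carrier_mat m m" "Rmat m a * Rinv = 1\<^sub>m m" "i < m" for Rinv i
    using entries[OF that(1,2,3)] that(3) by (intro sum_pos) auto
  show ?thesis
    using minors dirichlet_laplacian_pos_def[where c = c, OF c0 cpos] invertible entries row_sums
    by (simp add: R)
qed

end
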